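(* Let $G'$ be a finite loopless multigraph with edge multiplicity at most $2$ and maximum degree $\Delta>10^{20}$, let $H$ be the subgraph of $G'$ induced by the vertices of degree less than $\Delta/3$, and let $\sigma$ be a proper edge coloring of $G'$. Apply Phase I (defined in the context) to $\sigma$. Then for every two adjacent vertices $u,v\in V(G')\setminus V(H)$ with $\deg(u)=\deg(v)$, $$\Pr\big[u\notin L \ \text{ and } \ |S_{\sigma_1}(u)\,\triangle\, S_{\sigma_1}(v)|<10\big]<\frac{1}{\Delta^{7}}.$$
   Context: Phase I: (1) each edge $e\in E(G')\setminus E(H)$ is independently "uncolored" with probability $180/\Delta$; for a vertex $v$, $UC_v$ denotes the set of edges incident to $v$ that are uncolored in this step. (2) A vertex $v$ is recovered if $|UC_v|>290$; for every recovered vertex, all edges of $UC_v$ get back their color from $\sigma$. The resulting partial edge coloring is $\sigma_1$: an edge is uncolored in $\sigma_1$ iff it was uncolored in step (1) and neither endpoint is recovered; every other edge has its $\sigma$-color. $L$ is the set of vertices $v\in V(G')\setminus V(H)$ incident to fewer than $20$ edges uncolored in $\sigma_1$. For a partial coloring $c$, $S_c(v)$ is the set of colors on colored edges incident to $v$; $A\triangle B=(A\setminus B)\cup(B\setminus A)$. *)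

theory Defs
  imports "HOL-Probability.Probability"
begin

definition loopless_multigraph :: "'v set \<Rightarrow> 'e set \<Rightarrow> ('e \<Rightarrow> 'v set) \<Rightarrow> bool" where
  "loopless_multigraph V E ends \<longleftrightarrow> finite V \<and> finite E \<and>
     (\<forall>e\<in>E. ends e \<subseteq> V \<and> card (ends e) = 2)"

definition mult_le2 :: "'e set \<Rightarrow> ('e \<Rightarrow> 'v set) \<Rightarrow> bool" where
  "mult_le2 E ends \<longleftrightarrow> (\<forall>e\<in>E. card {f\<in>E. ends f = ends e} \<le> 2)"

definition deg :: "'e set \<Rightarrow> ('e \<Rightarrow> 'v set) \<Rightarrow> 'v \<Rightarrow> nat" where
  "deg E ends v = card {e\<in>E. v \<in> ends e}"

definition maxdeg :: "'v set \<Rightarrow> 'e set \<Rightarrow> ('e \<Rightarrow> 'v set) \<Rightarrow> nat" where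
  "maxdeg V E ends = Max (deg E ends ` V)"

definition VH :: "'v set \<Rightarrow> 'e set \<Rightarrow> ('e \<Rightarrow> 'v set) \<Rightarrow> 'v set" where
  "VH V E ends = {v\<in>V. real (deg E ends v) < real (maxdeg V E ends) / 3}"

definition EH :: "'v set \<Rightarrow> 'e set \<Rightarrow> ('e \<Rightarrow> 'v set) \<Rightarrow> 'e set" where
  "EH V E ends = {e\<in>E. ends e \<subseteq> VH V E ends}"

definition proper_edge_coloring :: "'e set \<Rightarrow> ('e \<Rightarrow> 'v set) \<Rightarrow> ('e \<Rightarrow> 'c) \<Rightarrow> bool" where
  "proper_edge_coloring E ends \<sigma> \<longleftrightarrow>
     (\<forall>e\<in>E. \<forall>f\<in>E. e \<noteq> f \<and> ends e \<inter> ends f \<noteq> {} \<longrightarrow> \<sigma> e \<noteq> \<sigma> f)"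

text \<open>Phase I. The random outcome X :: 'e => bool says which edges are uncolored in step (1);
  each edge of E - E(H) independently with probability 180/Delta, other edges never.\<close>
definition phase1_pmf :: "'v set \<Rightarrow> 'e set \<Rightarrow> ('e \<Rightarrow> 'v set) \<Rightarrow> ('e \<Rightarrow> bool) pmf" where
  "phase1_pmf V E ends =
     Pi_pmf (E - EH V E ends) False (\<lambda>_. bernoulli_pmf (180 / real (maxdeg V E ends)))"

definition UC :: "'e set \<Rightarrow> ('e \<Rightarrow> 'v set) \<Rightarrow> ('e \<Rightarrow> bool) \<Rightarrow> 'v \<Rightarrow> 'e set" where
  "UC E ends X v = {e\<in>E. v \<in> ends e \<and> X e}"

definition recovered :: "'e set \<Rightarrow> ('e \<Rightarrow> 'v set) \<Rightarrow> ('e \<Rightarrow> bool) \<Rightarrow> 'v \<Rightarrow> bool" where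
  "recovered E ends X v \<longleftrightarrow> card (UC E ends X v) > 290"

definition uncol1 :: "'e set \<Rightarrow> ('e \<Rightarrow> 'v set) \<Rightarrow> ('e \<Rightarrow> bool) \<Rightarrow> 'e \<Rightarrow> bool" where
  "uncol1 E ends X e \<longleftrightarrow> X e \<and> (\<forall>w\<in>ends e. \<not> recovered E ends X w)"

definition Lset :: "'v set \<Rightarrow> 'e set \<Rightarrow> ('e \<Rightarrow> 'v set) \<Rightarrow> ('e \<Rightarrow> bool) \<Rightarrow> 'v set" where
  "Lset V E ends X = {v\<in>V - VH V E ends. card {e\<in>E. v \<in> ends e \<and> uncol1 E ends X e} < 20}"

definition S1 :: "'e set \<Rightarrow> ('e \<Rightarrow> 'v set) \<Rightarrow> ('e \<Rightarrow> 'c) \<Rightarrow> ('e \<Rightarrow> bool) \<Rightarrow> 'v \<Rightarrow> 'c set" where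
  "S1 E ends \<sigma> X v = \<sigma> ` {e\<in>E. v \<in> ends e \<and> \<not> uncol1 E ends X e}"

definition symdiff :: "'a set \<Rightarrow> 'a set \<Rightarrow> 'a set" where
  "symdiff A B = (A - B) \<union> (B - A)"

end

theory Submission
  imports Defs
begin

text \<open>An edge uncolored in \<open>\<sigma>\<^sub>1\<close> was uncolored in step (1), so recovery can be ignored.
  Let \<open>k\<close> (\<open>private_count\<close>) be the number of colors at \<open>v\<close> missing at \<open>u\<close>. If \<open>u\<close>
  keeps at least 20 uncolored edges and \<open>S\<^sub>\<sigma>\<^sub>1(u)\<close>, \<open>S\<^sub>\<sigma>\<^sub>1(v)\<close> differ in fewer
  than 10 colors, then at least \<open>k + 9\<close> colors \<open>c\<close>, none of them the color of a
  \<open>uv\<close>-edge, have all edges of color \<open>c\<close> at \<open>u\<close> or \<open>v\<close> uncolored in step (1). These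
  color classes are disjoint, and those of the colors common to \<open>u\<close> and \<open>v\<close> have two
  edges each. With \<open>p = 180/\<Delta>\<close>, a union bound over the \<open>(k + 9)\<close>-sets of classes gives
  the bound \<open>(\<Delta>p\<^sup>2 + 2kp)\<^bsup>k+9\<^esup>/(k + 9)! \<le> (11880/\<Delta>)\<^sup>9 < \<Delta>\<^sup>-\<^sup>7\<close>.\<close>

lemma power_div_fact_le_exp:
  assumes "0 \<le> (x::real)"
  shows "x ^ n / fact n \<le> exp x"
proof -
  have sums: "(\<lambda>i. x ^ i / fact i) sums exp x"
    using exp_converges[of x] by (simp add: divide_inverse ac_simps)
  have "(\<Sum>i\<in>{n}. x ^ i / fact i) \<le> (\<Sum>i. x ^ i / fact i)"
    using assms sums_summable[OF sums] by (intro sum_le_suminf) auto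
  then show ?thesis using sums_unique[OF sums] by simp
qed

lemma power_div_fact_lt_inverse_power_7:
  fixes D S :: real and k :: nat
  assumes D: "D > 10 ^ 20" and S: "0 \<le> S" "S \<le> (32400 + 360 * real k) / D"
  shows "S ^ (k + 9) / fact (k + 9) < 1 / D ^ 7"
proof -
  define n where "n = k + 9"
  have D_pos: "D > 0" using D by simp
  have "S \<le> 3960 / D * real n" using S D_pos by (simp add: n_def field_simps)
  then have "S ^ n / fact n \<le> (3960 / D * real n) ^ n / fact n"
    using S by (intro divide_right_mono power_mono) auto
  also have "\<dots> = (3960 / D) ^ n * (real n ^ n / fact n)"
    by (simp only: power_mult_distrib times_divide_eq_right)
  also have "\<dots> \<le> (3960 / D) ^ n * exp 1 ^ n"
    using D_pos power_div_fact_le_exp[of "real n" n]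
    by (intro mult_left_mono) (auto simp: exp_of_nat_mult[symmetric])
  also have "\<dots> \<le> (3960 / D) ^ n * 3 ^ n"
    using D_pos exp_le by (intro mult_left_mono power_mono) auto
  also have "\<dots> = (11880 / D) ^ n" by (simp add: power_mult_distrib[symmetric])
  also have "\<dots> \<le> (11880 / D) ^ 9"
    using D by (intro power_decreasing) (auto simp: n_def)
  also have "\<dots> < 1 / D ^ 7"
  proof -
    have "(11880::real) ^ 9 < (10 ^ 20) ^ 2" by simp
    also have "\<dots> < D ^ 2" using D by (intro power_strict_mono) auto
    finally have "11880 ^ 9 / D ^ 9 < D ^ 2 / D ^ 9"
      using D_pos by (intro divide_strict_right_mono) auto
    also have "D ^ 2 / D ^ 9 = 1 / D ^ 7"
      using D_pos by (simp add: field_simps power_add[symmetric])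
    finally show ?thesis by (simp add: power_divide)
  qed
  finally show ?thesis by (simp add: n_def)
qed

lemma power_Suc_add_ge:
  assumes "0 \<le> (s::real)" "0 \<le> q"
  shows "s ^ Suc m + real (Suc m) * q * s ^ m \<le> (s + q) ^ Suc m"
proof (induction m)
  case 0
  then show ?case by simp
next
  case (Suc m)
  have "s ^ Suc (Suc m) + real (Suc (Suc m)) * q * s ^ Suc m
     \<le> (s + q) * (s ^ Suc m + real (Suc m) * q * s ^ m)"
    using assms by (simp add: algebra_simps)
  also have "\<dots> \<le> (s + q) * (s + q) ^ Suc m"
    using Suc assms by (intro mult_left_mono) auto
  finally show ?case by simp
qed

lemma subsets_card_Suc_insert:
  assumes "finite A" "a \<notin> A"
  shows "{B. B \<subseteq> insert a A \<and> card B = Suc m}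
       = {B. B \<subseteq> A \<and> card B = Suc m} \<union> insert a ` {B. B \<subseteq> A \<and> card B = m}"
proof (intro equalityI subsetI)
  fix B assume B: "B \<in> {B. B \<subseteq> insert a A \<and> card B = Suc m}"
  then have "finite B" using assms(1) finite_subset by auto
  show "B \<in> {B. B \<subseteq> A \<and> card B = Suc m} \<union> insert a ` {B. B \<subseteq> A \<and> card B = m}"
  proof (cases "a \<in> B")
    case True
    then have "B = insert a (B - {a})" "B - {a} \<subseteq> A" "card (B - {a}) = m"
      using B \<open>finite B\<close> by auto
    then show ?thesis by blast
  qed (use B in auto)
next
  fix B assume "B \<in> {B. B \<subseteq> A \<and> card B = Suc m} \<union> insert a ` {B. B \<subseteq> A \<and> card B = m}"
  then show "B \<in> {B. B \<subseteq> insert a A \<and> card B = Suc m}"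
    using assms by (auto intro!: card_insert_disjoint intro: finite_subset)
qed

lemma fact_mult_sum_prod_subsets_le:
  fixes f :: "'a \<Rightarrow> real"
  assumes "finite A" "\<And>x. x \<in> A \<Longrightarrow> 0 \<le> f x"
  shows "fact n * (\<Sum>B | B \<subseteq> A \<and> card B = n. prod f B) \<le> sum f A ^ n"
  using assms
proof (induction A arbitrary: n rule: finite_induct)
  case empty
  have "{B :: 'a set. B \<subseteq> {} \<and> card B = n} = (if n = 0 then {{}} else {})" by auto
  then show ?case by simp
next
  case (insert a A)
  define P where "P k = {B. B \<subseteq> A \<and> card B = k}" for k
  have nonneg: "0 \<le> sum f A" "0 \<le> f a" "\<And>x. x \<in> A \<Longrightarrow> 0 \<le> f x"
    using insert.prems by (auto intro: sum_nonneg)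
  have IH: "fact k * (\<Sum>B\<in>P k. prod f B) \<le> sum f A ^ k" for k
    using insert.IH[OF nonneg(3)] by (simp add: P_def)
  show ?case
  proof (cases n)
    case 0
    have "{B. B \<subseteq> insert a A \<and> card B = 0} = {{}}"
      using insert.hyps by (auto dest: finite_subset[of _ "insert a A"])
    then show ?thesis using 0 by simp
  next
    case (Suc m)
    have finP: "finite (P k)" for k using insert.hyps by (simp add: P_def)
    have inserted: "(\<Sum>B\<in>insert a ` P m. prod f B) = f a * (\<Sum>B\<in>P m. prod f B)"
    proof -
      have "inj_on (insert a) (P m)" using insert.hyps by (auto simp: P_def inj_on_def)
      moreover have "prod f (insert a B) = f a * prod f B" if "B \<in> P m" for B
        using that insert.hyps by (auto simp: P_def intro!: prod.insert intro: finite_subset)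
      ultimately show ?thesis by (simp add: sum.reindex sum_distrib_left)
    qed
    have "(\<Sum>B | B \<subseteq> insert a A \<and> card B = Suc m. prod f B)
        = (\<Sum>B\<in>P (Suc m). prod f B) + (\<Sum>B\<in>insert a ` P m. prod f B)"
      unfolding subsets_card_Suc_insert[OF insert.hyps] P_def[symmetric]
      using insert.hyps finP by (intro sum.union_disjoint) (auto simp: P_def)
    then have "fact n * (\<Sum>B | B \<subseteq> insert a A \<and> card B = n. prod f B)
        = fact (Suc m) * (\<Sum>B\<in>P (Suc m). prod f B)
          + real (Suc m) * f a * (fact m * (\<Sum>B\<in>P m. prod f B))"
      using Suc inserted by (simp add: algebra_simps)
    also have "\<dots> \<le> sum f A ^ Suc m + real (Suc m) * f a * sum f A ^ m"
      using nonneg by (intro add_mono mult_left_mono IH) auto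
    also have "\<dots> \<le> (sum f A + f a) ^ Suc m"
      using nonneg(1,2) by (rule power_Suc_add_ge)
    finally show ?thesis using Suc insert.hyps by (simp add: add.commute)
  qed
qed

lemma prob_Pi_pmf_all_True:
  assumes "finite A" "W \<subseteq> A" "0 \<le> p" "p \<le> 1"
  shows "measure_pmf.prob (Pi_pmf A False (\<lambda>_. bernoulli_pmf p)) {X. \<forall>e\<in>W. X e} = p ^ card W"
proof -
  have "{X. \<forall>e\<in>W. X e} = Pi A (\<lambda>e. if e \<in> W then {True} else UNIV)"
    using assms(2) by (auto simp: Pi_def)
  then have "measure_pmf.prob (Pi_pmf A False (\<lambda>_. bernoulli_pmf p)) {X. \<forall>e\<in>W. X e}
      = (\<Prod>e\<in>A. measure_pmf.prob (bernoulli_pmf p) (if e \<in> W then {True} else UNIV))"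
    using assms(1) by (simp add: measure_Pi_pmf_Pi)
  also have "\<dots> = (\<Prod>e\<in>A. if e \<in> W then p else 1)"
    using assms(3,4) by (intro prod.cong) (auto simp: measure_pmf_single)
  also have "\<dots> = p ^ card W"
    using assms(1,2) by (simp add: prod.If_cases Int_absorb1)
  finally show ?thesis .
qed

text \<open>Union bound over the \<open>n\<close>-sets of classes, whose all-true events have probability
  \<open>\<Prod>p ^ card (W c)\<close> by disjointness; the sum of these products is an elementary symmetric
  function.\<close>
lemma prob_Pi_pmf_many_classes_all_True:
  fixes W :: "'c \<Rightarrow> 'e set"
  assumes "finite A" "finite C" "0 \<le> p" "p \<le> 1"
    and "disjoint_family_on W C" "\<And>c. c \<in> C \<Longrightarrow> W c \<subseteq> A"
  shows "measure_pmf.prob (Pi_pmf A False (\<lambda>_. bernoulli_pmf p))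
           {X. n \<le> card {c\<in>C. \<forall>e\<in>W c. X e}}
         \<le> (\<Sum>c\<in>C. p ^ card (W c)) ^ n / fact n"
proof -
  let ?M = "Pi_pmf A False (\<lambda>_. bernoulli_pmf p)"
  define Cs where "Cs = {D. D \<subseteq> C \<and> card D = n}"
  have finCs: "finite Cs" using assms(2) by (simp add: Cs_def)
  have cover: "{X. n \<le> card {c\<in>C. \<forall>e\<in>W c. X e}} \<subseteq> (\<Union>D\<in>Cs. {X. \<forall>e\<in>\<Union>(W ` D). X e})"
  proof
    fix X assume "X \<in> {X. n \<le> card {c\<in>C. \<forall>e\<in>W c. X e}}"
    then obtain D where "D \<subseteq> {c\<in>C. \<forall>e\<in>W c. X e}" "card D = n"
      by (auto intro: obtain_subset_with_card_n)
    then show "X \<in> (\<Union>D\<in>Cs. {X. \<forall>e\<in>\<Union>(W ` D). X e})" by (auto simp: Cs_def)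
  qed
  have prob_all_True_on: "measure_pmf.prob ?M {X. \<forall>e\<in>\<Union>(W ` D). X e} = (\<Prod>c\<in>D. p ^ card (W c))"
    if "D \<in> Cs" for D
  proof -
    have D: "D \<subseteq> C" "finite D" using that assms(2) by (auto simp: Cs_def finite_subset)
    have sub: "\<Union>(W ` D) \<subseteq> A" using D assms(6) by auto
    have card: "card (\<Union>(W ` D)) = (\<Sum>c\<in>D. card (W c))"
      using D assms(1,6) disjoint_family_on_mono[OF D(1) assms(5)]
      by (intro card_UN_disjoint') (auto intro: finite_subset)
    have "measure_pmf.prob ?M {X. \<forall>e\<in>\<Union>(W ` D). X e} = p ^ card (\<Union>(W ` D))"
      using assms(1) sub assms(3,4) by (rule prob_Pi_pmf_all_True)
    then show ?thesis by (simp add: card power_sum)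
  qed
  have "measure_pmf.prob ?M {X. n \<le> card {c\<in>C. \<forall>e\<in>W c. X e}}
      \<le> measure_pmf.prob ?M (\<Union>D\<in>Cs. {X. \<forall>e\<in>\<Union>(W ` D). X e})"
    using cover by (intro measure_pmf.finite_measure_mono) auto
  also have "\<dots> \<le> (\<Sum>D\<in>Cs. measure_pmf.prob ?M {X. \<forall>e\<in>\<Union>(W ` D). X e})"
    using finCs by (intro measure_pmf.finite_measure_subadditive_finite) auto
  also have "\<dots> = (\<Sum>D\<in>Cs. \<Prod>c\<in>D. p ^ card (W c))"
    using prob_all_True_on by (rule sum.cong[OF refl])
  also have "\<dots> \<le> (\<Sum>c\<in>C. p ^ card (W c)) ^ n / fact n"
  proof -
    have "fact n * (\<Sum>D\<in>Cs. \<Prod>c\<in>D. p ^ card (W c)) \<le> (\<Sum>c\<in>C. p ^ card (W c)) ^ n"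
      unfolding Cs_def using assms(2,3) by (intro fact_mult_sum_prod_subsets_le) auto
    then show ?thesis by (simp add: pos_le_divide_eq mult.commute)
  qed
  finally show ?thesis .
qed

lemma deg_le_maxdeg:
  assumes "finite V" "v \<in> V"
  shows "deg E ends v \<le> maxdeg V E ends"
  using assms by (simp add: maxdeg_def)

lemma card_edges_joining_le_2:
  assumes "loopless_multigraph V E ends" "mult_le2 E ends" "u \<noteq> v"
  shows "card {e\<in>E. u \<in> ends e \<and> v \<in> ends e} \<le> 2"
proof (cases "{e\<in>E. u \<in> ends e \<and> v \<in> ends e} = {}")
  case True
  then show ?thesis by (simp only: card.empty)
next
  case False
  then obtain e0 where e0: "e0 \<in> E" "u \<in> ends e0" "v \<in> ends e0" by blast
  have ends_eq: "ends e = {u, v}" if "e \<in> E" "u \<in> ends e" "v \<in> ends e" for e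
  proof -
    have "card (ends e) = 2" using assms(1) that(1) by (simp add: loopless_multigraph_def)
    then show ?thesis using that(2,3) assms(3) by (auto simp: card_2_iff)
  qed
  have "{e\<in>E. u \<in> ends e \<and> v \<in> ends e} = {f\<in>E. ends f = ends e0}"
    using e0 ends_eq by auto
  then show ?thesis using assms(2) e0(1) by (simp add: mult_le2_def)
qed

lemma proper_edge_coloring_inj_on_incident:
  assumes "proper_edge_coloring E ends \<sigma>"
  shows "inj_on \<sigma> {e\<in>E. v \<in> ends e}"
  using assms by (auto simp: inj_on_def proper_edge_coloring_def)

locale equal_degree_pair =
  fixes E :: "'e set" and ends :: "'e \<Rightarrow> 'v set" and \<sigma> :: "'e \<Rightarrow> 'c" and u v :: 'v
  assumes finite_edges: "finite E"
    and proper: "proper_edge_coloring E ends \<sigma>"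
    and deg_eq: "deg E ends u = deg E ends v"
    and card_joining_le_2: "card {e\<in>E. u \<in> ends e \<and> v \<in> ends e} \<le> 2"
begin

definition Eu :: "'e set" where "Eu = {e\<in>E. u \<in> ends e}"
definition Ev :: "'e set" where "Ev = {e\<in>E. v \<in> ends e}"
definition Cu :: "'c set" where "Cu = \<sigma> ` Eu"
definition Cv :: "'c set" where "Cv = \<sigma> ` Ev"
definition joining_colors :: "'c set" where "joining_colors = \<sigma> ` (Eu \<inter> Ev)"
definition nonjoining_colors :: "'c set" where "nonjoining_colors = (Cu \<union> Cv) - joining_colors"
definition color_class :: "'c \<Rightarrow> 'e set" where "color_class c = {e\<in>Eu \<union> Ev. \<sigma> e = c}"
definition private_count :: nat where "private_count = card (Cv - Cu)"

lemma finite_Eu: "finite Eu" and finite_Ev: "finite Ev"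
  using finite_edges by (simp_all add: Eu_def Ev_def)

lemma finite_Cu: "finite Cu" and finite_Cv: "finite Cv"
  using finite_Eu finite_Ev by (simp_all add: Cu_def Cv_def)

lemma finite_nonjoining_colors: "finite nonjoining_colors"
  using finite_Cu finite_Cv by (simp add: nonjoining_colors_def)

lemma inj_on_Eu: "inj_on \<sigma> Eu" and inj_on_Ev: "inj_on \<sigma> Ev"
  using proper_edge_coloring_inj_on_incident[OF proper] by (simp_all add: Eu_def Ev_def)

lemma card_Cu: "card Cu = card Eu" and card_Cv: "card Cv = card Eu"
proof -
  show "card Cu = card Eu" using inj_on_Eu by (simp add: Cu_def card_image)
  have "card Ev = card Eu" using deg_eq by (simp add: deg_def Eu_def Ev_def)
  then show "card Cv = card Eu" using inj_on_Ev by (simp add: Cv_def card_image)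
qed

lemma card_Cu_diff_Cv: "card (Cu - Cv) = private_count"
proof -
  have "card (Cu - Cv) = card Cu - card (Cu \<inter> Cv)"
    using finite_Cu by (simp add: card_Diff_subset_Int)
  also have "\<dots> = card Cv - card (Cv \<inter> Cu)" using card_Cu card_Cv by (simp add: Int_commute)
  also have "\<dots> = private_count"
    using finite_Cv by (simp add: card_Diff_subset_Int private_count_def)
  finally show ?thesis .
qed

lemma card_Cu_Un_Cv: "card (Cu \<union> Cv) = card Eu + private_count"
proof -
  have "card (Cu \<union> Cv) = card Cu + card (Cv - Cu)"
    using finite_Cu finite_Cv by (subst Un_Diff_cancel[symmetric], subst card_Un_disjoint) auto
  then show ?thesis using card_Cu by (simp add: private_count_def)
qed

lemma card_joining_colors: "card joining_colors \<le> 2"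
proof -
  have "card joining_colors \<le> card (Eu \<inter> Ev)"
    using finite_Eu by (simp add: joining_colors_def card_image_le)
  also have "Eu \<inter> Ev = {e\<in>E. u \<in> ends e \<and> v \<in> ends e}" by (auto simp: Eu_def Ev_def)
  finally show ?thesis using card_joining_le_2 by simp
qed

lemma color_class_subset: "color_class c \<subseteq> Eu \<union> Ev"
  by (auto simp: color_class_def)

lemma disjoint_family_color_class: "disjoint_family_on color_class C"
  by (auto simp: disjoint_family_on_def color_class_def)

lemma card_color_class_ge_1:
  assumes "c \<in> Cu \<union> Cv"
  shows "1 \<le> card (color_class c)"
proof -
  obtain e where "e \<in> color_class c" using assms by (auto simp: Cu_def Cv_def color_class_def)
  moreover have "finite (color_class c)"
    using finite_Eu finite_Ev by (auto intro: finite_subset[OF color_class_subset])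
  ultimately show ?thesis by (auto simp: Suc_le_eq card_gt_0_iff)
qed

text \<open>The edges of color \<open>c\<close> at \<open>u\<close> and at \<open>v\<close> differ because \<open>c\<close> is not the
  color of an edge joining \<open>u\<close> and \<open>v\<close>.\<close>
lemma card_color_class_ge_2:
  assumes "c \<in> Cu \<inter> Cv - joining_colors"
  shows "2 \<le> card (color_class c)"
proof -
  obtain eu ev where "eu \<in> Eu" "ev \<in> Ev" "\<sigma> eu = c" "\<sigma> ev = c"
    using assms by (auto simp: Cu_def Cv_def)
  moreover have "eu \<noteq> ev" using assms calculation by (auto simp: joining_colors_def)
  ultimately have "card {eu, ev} \<le> card (color_class c)"
    using finite_Eu finite_Ev by (intro card_mono) (auto simp: color_class_def)
  then show ?thesis using \<open>eu \<noteq> ev\<close> by simp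
qed

text \<open>Think of \<open>U\<close> as the edges uncolored in \<open>\<sigma>\<^sub>1\<close>. At most \<open>deg u - 11\<close> colors survive
  at \<open>u\<close> or \<open>v\<close>, out of \<open>deg u + private_count\<close> present, and at most two of the lost
  ones are joining colors.\<close>
lemma many_uncolored_color_classes:
  assumes "20 \<le> card (Eu \<inter> U)"
    and "card (symdiff (\<sigma> ` (Eu - U)) (\<sigma> ` (Ev - U))) < 10"
  shows "private_count + 9 \<le> card {c\<in>nonjoining_colors. color_class c \<subseteq> U}"
proof -
  define Su where "Su = \<sigma> ` (Eu - U)"
  define Sv where "Sv = \<sigma> ` (Ev - U)"
  have finite: "finite Su" "finite Sv" using finite_Eu finite_Ev by (simp_all add: Su_def Sv_def)
  have "card Su = card Eu - card (Eu \<inter> U)"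
    using inj_on_Eu finite_Eu
    by (simp add: Su_def card_image inj_on_subset card_Diff_subset_Int)
  moreover have "card (Eu \<inter> U) \<le> card Eu" using finite_Eu by (intro card_mono) auto
  ultimately have card_Su: "card Su + 20 \<le> card Eu" using assms(1) by linarith
  have "card (Su \<union> Sv) \<le> card Su + card (Sv - Su)"
    by (metis Un_Diff_cancel card_Un_le)
  also have "card (Sv - Su) \<le> card (symdiff Su Sv)"
    using finite by (intro card_mono) (auto simp: symdiff_def)
  finally have card_survivors: "card (Su \<union> Sv) + 11 \<le> card Eu"
    using card_Su assms(2) by (simp add: Su_def Sv_def)
  have "(Cu \<union> Cv) - (Su \<union> Sv) - joining_colors \<subseteq> {c\<in>nonjoining_colors. color_class c \<subseteq> U}"
    by (auto simp: nonjoining_colors_def color_class_def Su_def Sv_def)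
  then have "card ((Cu \<union> Cv) - (Su \<union> Sv) - joining_colors)
      \<le> card {c\<in>nonjoining_colors. color_class c \<subseteq> U}"
    using finite_nonjoining_colors by (intro card_mono) auto
  moreover have "card (Cu \<union> Cv) - card (Su \<union> Sv) - card joining_colors
      \<le> card ((Cu \<union> Cv) - (Su \<union> Sv) - joining_colors)"
    using finite diff_card_le_card_Diff[of "Su \<union> Sv" "Cu \<union> Cv"]
      diff_card_le_card_Diff[of joining_colors "(Cu \<union> Cv) - (Su \<union> Sv)"]
      finite_Cu finite_Cv finite_Eu
    by (simp add: joining_colors_def)
  ultimately show ?thesis
    using card_Cu_Un_Cv card_survivors card_joining_colors by linarith
qed

lemma sum_color_class_weights_le:
  assumes "0 \<le> p" "p \<le> 1"
  shows "(\<Sum>c\<in>nonjoining_colors. p ^ card (color_class c))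
         \<le> real (card Eu) * p\<^sup>2 + real (2 * private_count) * p"
proof -
  let ?w = "\<lambda>c. p ^ card (color_class c)"
  have split: "nonjoining_colors = (Cu \<inter> Cv - joining_colors) \<union> ((Cu - Cv) \<union> (Cv - Cu))"
    by (auto simp: nonjoining_colors_def joining_colors_def Cu_def Cv_def)
  have "sum ?w nonjoining_colors = sum ?w (Cu \<inter> Cv - joining_colors) + sum ?w ((Cu - Cv) \<union> (Cv - Cu))"
    unfolding split using finite_Cu finite_Cv by (intro sum.union_disjoint) auto
  also have "sum ?w (Cu \<inter> Cv - joining_colors) \<le> real (card (Cu \<inter> Cv - joining_colors)) * p\<^sup>2"
    using assms card_color_class_ge_2 by (intro sum_bounded_above power_decreasing) auto
  also have "sum ?w ((Cu - Cv) \<union> (Cv - Cu)) \<le> real (card ((Cu - Cv) \<union> (Cv - Cu))) * p"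
    using assms card_color_class_ge_1 power_decreasing[of 1 _ p]
    by (intro sum_bounded_above) auto
  also have "real (card (Cu \<inter> Cv - joining_colors)) * p\<^sup>2
      + real (card ((Cu - Cv) \<union> (Cv - Cu))) * p
      \<le> real (card Eu) * p\<^sup>2 + real (2 * private_count) * p"
  proof (intro add_mono mult_right_mono)
    have "card (Cu \<inter> Cv - joining_colors) \<le> card Cu" using finite_Cu by (intro card_mono) auto
    then show "real (card (Cu \<inter> Cv - joining_colors)) \<le> real (card Eu)" using card_Cu by simp
    have "card ((Cu - Cv) \<union> (Cv - Cu)) \<le> card (Cu - Cv) + card (Cv - Cu)" by (rule card_Un_le)
    then show "real (card ((Cu - Cv) \<union> (Cv - Cu))) \<le> real (2 * private_count)"
      using card_Cu_diff_Cv by (simp add: private_count_def)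
  qed (use assms in auto)
  finally show ?thesis by simp
qed

lemma phase1_event_subset:
  assumes "u \<in> V - VH V E ends"
  shows "{X. u \<notin> Lset V E ends X \<and> card (symdiff (S1 E ends \<sigma> X u) (S1 E ends \<sigma> X v)) < 10}
         \<subseteq> {X. private_count + 9 \<le> card {c\<in>nonjoining_colors. \<forall>e\<in>color_class c. X e}}"
proof safe
  fix X
  assume notin_L: "u \<notin> Lset V E ends X"
    and close: "card (symdiff (S1 E ends \<sigma> X u) (S1 E ends \<sigma> X v)) < 10"
  define U where "U = {e. uncol1 E ends X e}"
  have "S1 E ends \<sigma> X w = \<sigma> ` ({e\<in>E. w \<in> ends e} - U)" for w
    by (auto simp: S1_def U_def)
  then have "card (symdiff (\<sigma> ` (Eu - U)) (\<sigma> ` (Ev - U))) < 10"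
    using close by (simp add: Eu_def Ev_def)
  moreover have "20 \<le> card (Eu \<inter> U)"
    using notin_L assms by (auto simp: Lset_def Eu_def U_def Int_def)
  ultimately have "private_count + 9 \<le> card {c\<in>nonjoining_colors. color_class c \<subseteq> U}"
    by (intro many_uncolored_color_classes)
  also have "\<dots> \<le> card {c\<in>nonjoining_colors. \<forall>e\<in>color_class c. X e}"
    using finite_nonjoining_colors by (intro card_mono) (auto simp: U_def uncol1_def)
  finally show "private_count + 9 \<le> card {c\<in>nonjoining_colors. \<forall>e\<in>color_class c. X e}" .
qed

lemma prob_many_full_color_classes_lt:
  assumes "finite A" "Eu \<union> Ev \<subseteq> A" "D > 10 ^ 20" "real (card Eu) \<le> D"
  shows "measure_pmf.prob (Pi_pmf A False (\<lambda>_. bernoulli_pmf (180 / D)))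
           {X. private_count + 9 \<le> card {c\<in>nonjoining_colors. \<forall>e\<in>color_class c. X e}}
         < 1 / D ^ 7"
proof -
  define p where "p = 180 / D"
  have p: "0 \<le> p" "p \<le> 1" using assms(3) by (simp_all add: p_def)
  let ?n = "private_count + 9" and ?w = "\<lambda>c. p ^ card (color_class c)"
  have "measure_pmf.prob (Pi_pmf A False (\<lambda>_. bernoulli_pmf p))
      {X. ?n \<le> card {c\<in>nonjoining_colors. \<forall>e\<in>color_class c. X e}} \<le> sum ?w nonjoining_colors ^ ?n / fact ?n"
    using assms(1,2) p color_class_subset
    by (intro prob_Pi_pmf_many_classes_all_True disjoint_family_color_class finite_nonjoining_colors) auto
  also have "\<dots> < 1 / D ^ 7"
  proof (rule power_div_fact_lt_inverse_power_7)
    show "D > 10 ^ 20" by (fact assms(3))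
    show "0 \<le> sum ?w nonjoining_colors" using p by (simp add: sum_nonneg)
    have "sum ?w nonjoining_colors \<le> real (card Eu) * p\<^sup>2 + real (2 * private_count) * p"
      using p by (rule sum_color_class_weights_le)
    also have "\<dots> \<le> D * p\<^sup>2 + real (2 * private_count) * p"
      using assms(4) by (intro add_right_mono mult_right_mono) auto
    also have "\<dots> = (32400 + 360 * real private_count) / D"
      using assms(3) by (simp add: p_def field_simps power2_eq_square)
    finally show "sum ?w nonjoining_colors \<le> (32400 + 360 * real private_count) / D" .
  qed
  finally show ?thesis by (simp add: p_def)
qed

end

theorem lemma3:
  fixes V :: "'v set" and E :: "'e set" and ends :: "'e \<Rightarrow> 'v set" and \<sigma> :: "'e \<Rightarrow> 'c"
    and u v :: 'v
  assumes "loopless_multigraph V E ends"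
    and "mult_le2 E ends"
    and "real (maxdeg V E ends) > 10 ^ 20"
    and "proper_edge_coloring E ends \<sigma>"
    and "u \<in> V - VH V E ends" and "v \<in> V - VH V E ends"
    and "\<exists>e\<in>E. ends e = {u, v}"
    and "deg E ends u = deg E ends v"
  shows "measure_pmf.prob (phase1_pmf V E ends)
           {X. u \<notin> Lset V E ends X \<and> card (symdiff (S1 E ends \<sigma> X u) (S1 E ends \<sigma> X v)) < 10}
         < 1 / real (maxdeg V E ends) ^ 7"
proof -
  have finite: "finite V" "finite E" using assms(1) by (simp_all add: loopless_multigraph_def)
  have "u \<noteq> v" using assms(1,7) by (auto simp: loopless_multigraph_def)
  interpret equal_degree_pair E ends \<sigma> u v
    using finite(2) assms(4,8) card_edges_joining_le_2[OF assms(1,2) \<open>u \<noteq> v\<close>]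
    by unfold_locales
  have "measure_pmf.prob (phase1_pmf V E ends)
      {X. u \<notin> Lset V E ends X \<and> card (symdiff (S1 E ends \<sigma> X u) (S1 E ends \<sigma> X v)) < 10}
      \<le> measure_pmf.prob (phase1_pmf V E ends)
      {X. private_count + 9 \<le> card {c\<in>nonjoining_colors. \<forall>e\<in>color_class c. X e}}"
    using phase1_event_subset[OF assms(5)] by (rule measure_pmf.finite_measure_mono) simp
  also have "\<dots> < 1 / real (maxdeg V E ends) ^ 7"
    unfolding phase1_pmf_def
  proof (rule prob_many_full_color_classes_lt)
    show "Eu \<union> Ev \<subseteq> E - EH V E ends"
      using assms(5,6) by (auto simp: Eu_def Ev_def EH_def)
    show "real (card Eu) \<le> real (maxdeg V E ends)"
      using deg_le_maxdeg[OF finite(1), of u E ends] assms(5) by (simp add: deg_def Eu_def)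
  qed (use finite(2) assms(3) in auto)
  finally show ?thesis .
qed

end
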